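(* Let $X$ be a group and $B$ a left $X$-group. The assignment $[q]\mapsto[(q\circ\iota_X)^{-1}]$, where $(q\circ\iota_X)^{-1}(x)=(q(\iota_X(x)))^{-1}$, is a well-defined isomorphism of pointed sets $$\mathsf{Desc}^1(\mathsf T^l_{\iota_B},((B,m_B),p_B))\cong\mathcal H^1(X,B),$$ and there is an isomorphism of groups $\mathsf{Desc}^0(\mathsf T^l_{\iota_B},((B,m_B),p_B))\cong\mathcal H^0(X,B)$. In particular these coincide with Serre's non-abelian cohomology $H^1(X,B)$ and $H^0(X,B)$.
   Context: A left $X$-group is a group $B$ with $\star:X\times B\to B$ satisfying $1_X\star b=b$, $(x_1x_2)\star b=x_1\star(x_2\star b)$, $x\star(b_1b_2)=(x\star b_1)(x\star b_2)$. $B\rtimes X$ is the group on $B\times X$ with $(b_1,x_1)(b_2,x_2)=(b_1(x_1\star b_2),x_1x_2)$; $\iota_B(b)=(b,1_X)$, $\iota_X(x)=(1_B,x)$, $p_B(b,x)=b$. $\mathcal H^0(X,B)=\{b: x\star b=b\ \forall x\}$; a 1-cocycle is $r:X\to B$ with $r(x_1x_2)=r(x_1)(x_1\star r(x_2))$; $r\sim r'$ iff $r(x)(x\star b_0)=b_0r'(x)$ for some $b_0\in B$ and all $x$; $\mathcal H^1(X,B)$ is the set of classes, pointed by the class of the trivial cocycle. $\mathcal Z^1(\mathsf T^l_{\iota_B},(B,m_B))$ is the set of maps $q:B\rtimes X\to B$ with (ZL1) $q(1)=1_B$, (ZL2) $q(\iota_B(b)a)=b\,q(a)$, (ZL3)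 $q(aa')=q(a\,\iota_B(q(a')))$ (algebra structures on the left $B$-set $B$ for the monad $(B\rtimes X)\otimes_B-$), pointed by $p_B$; $\mathsf{Desc}^1(\mathsf T^l_{\iota_B},((B,m_B),p_B))$ is its quotient by $q\sim q'$ iff $q(a)b_0=q'(a\,\iota_B(b_0))$ for some $b_0\in B$ and all $a$, pointed by $[p_B]$; $\mathsf{Desc}^0$ is the automorphism group of the algebra $((B,m_B),p_B)$, i.e. the group of maps $b\mapsto bb_0$ with $p_B(a\,\iota_B(b_0))=p_B(a)b_0$ for all $a$, under composition. *)

theory Defs
  imports "HOL-Algebra.Group" "HOL-Library.FuncSet"
begin

definition left_X_group ::
  "('x,'c) monoid_scheme \<Rightarrow> ('b,'d) monoid_scheme \<Rightarrow> ('x \<Rightarrow> 'b \<Rightarrow> 'b) \<Rightarrow> bool" where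
  "left_X_group X B act \<longleftrightarrow> group X \<and> group B \<and>
     (\<forall>x\<in>carrier X. \<forall>b\<in>carrier B. act x b \<in> carrier B) \<and>
     (\<forall>b\<in>carrier B. act \<one>\<^bsub>X\<^esub> b = b) \<and>
     (\<forall>x1\<in>carrier X. \<forall>x2\<in>carrier X. \<forall>b\<in>carrier B.
         act (x1 \<otimes>\<^bsub>X\<^esub> x2) b = act x1 (act x2 b)) \<and>
     (\<forall>x\<in>carrier X. \<forall>b1\<in>carrier B. \<forall>b2\<in>carrier B.
         act x (b1 \<otimes>\<^bsub>B\<^esub> b2) = act x b1 \<otimes>\<^bsub>B\<^esub> act x b2)"

definition sdp ::
  "('x,'c) monoid_scheme \<Rightarrow> ('b,'d) monoid_scheme \<Rightarrow> ('x \<Rightarrow> 'b \<Rightarrow> 'b) \<Rightarrow> ('b \<times> 'x) monoid" where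
  "sdp X B act = \<lparr> carrier = carrier B \<times> carrier X,
     mult = (\<lambda>(b1,x1) (b2,x2). (b1 \<otimes>\<^bsub>B\<^esub> act x1 b2, x1 \<otimes>\<^bsub>X\<^esub> x2)),
     one = (\<one>\<^bsub>B\<^esub>, \<one>\<^bsub>X\<^esub>) \<rparr>"

definition iota_B :: "('x,'c) monoid_scheme \<Rightarrow> 'b \<Rightarrow> 'b \<times> 'x" where
  "iota_B X b = (b, \<one>\<^bsub>X\<^esub>)"

definition iota_X :: "('b,'d) monoid_scheme \<Rightarrow> 'x \<Rightarrow> 'b \<times> 'x" where
  "iota_X B x = (\<one>\<^bsub>B\<^esub>, x)"

definition p_B ::
  "('x,'c) monoid_scheme \<Rightarrow> ('b,'d) monoid_scheme \<Rightarrow> ('x \<Rightarrow> 'b \<Rightarrow> 'b) \<Rightarrow> 'b \<times> 'x \<Rightarrow> 'b" where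
  "p_B X B act = restrict fst (carrier (sdp X B act))"

definition H0 ::
  "('x,'c) monoid_scheme \<Rightarrow> ('b,'d) monoid_scheme \<Rightarrow> ('x \<Rightarrow> 'b \<Rightarrow> 'b) \<Rightarrow> 'b set" where
  "H0 X B act = {b \<in> carrier B. \<forall>x\<in>carrier X. act x b = b}"

definition H0_group ::
  "('x,'c) monoid_scheme \<Rightarrow> ('b,'d) monoid_scheme \<Rightarrow> ('x \<Rightarrow> 'b \<Rightarrow> 'b) \<Rightarrow> ('b,'d) monoid_scheme" where
  "H0_group X B act = B\<lparr>carrier := H0 X B act\<rparr>"

definition Z1 ::
  "('x,'c) monoid_scheme \<Rightarrow> ('b,'d) monoid_scheme \<Rightarrow> ('x \<Rightarrow> 'b \<Rightarrow> 'b) \<Rightarrow> ('x \<Rightarrow> 'b) set" where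
  "Z1 X B act = {r \<in> carrier X \<rightarrow>\<^sub>E carrier B.
     \<forall>x1\<in>carrier X. \<forall>x2\<in>carrier X.
        r (x1 \<otimes>\<^bsub>X\<^esub> x2) = r x1 \<otimes>\<^bsub>B\<^esub> act x1 (r x2)}"

definition coh_rel ::
  "('x,'c) monoid_scheme \<Rightarrow> ('b,'d) monoid_scheme \<Rightarrow> ('x \<Rightarrow> 'b \<Rightarrow> 'b) \<Rightarrow> (('x \<Rightarrow> 'b) \<times> ('x \<Rightarrow> 'b)) set" where
  "coh_rel X B act = {(r, r'). r \<in> Z1 X B act \<and> r' \<in> Z1 X B act \<and>
     (\<exists>b0\<in>carrier B. \<forall>x\<in>carrier X. r x \<otimes>\<^bsub>B\<^esub> act x b0 = b0 \<otimes>\<^bsub>B\<^esub> r' x)}"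

definition H1 ::
  "('x,'c) monoid_scheme \<Rightarrow> ('b,'d) monoid_scheme \<Rightarrow> ('x \<Rightarrow> 'b \<Rightarrow> 'b) \<Rightarrow> ('x \<Rightarrow> 'b) set set" where
  "H1 X B act = Z1 X B act // coh_rel X B act"

definition triv_cocycle ::
  "('x,'c) monoid_scheme \<Rightarrow> ('b,'d) monoid_scheme \<Rightarrow> 'x \<Rightarrow> 'b" where
  "triv_cocycle X B = (\<lambda>x\<in>carrier X. \<one>\<^bsub>B\<^esub>)"

definition H1_base ::
  "('x,'c) monoid_scheme \<Rightarrow> ('b,'d) monoid_scheme \<Rightarrow> ('x \<Rightarrow> 'b \<Rightarrow> 'b) \<Rightarrow> ('x \<Rightarrow> 'b) set" where
  "H1_base X B act = coh_rel X B act `` {triv_cocycle X B}"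

text \<open>Z^1(T^l_{iota_B},(B,m_B)): algebra structures q : B \<rtimes> X \<rightarrow> B (ZL1)-(ZL3).\<close>
definition ZL ::
  "('x,'c) monoid_scheme \<Rightarrow> ('b,'d) monoid_scheme \<Rightarrow> ('x \<Rightarrow> 'b \<Rightarrow> 'b) \<Rightarrow> ('b \<times> 'x \<Rightarrow> 'b) set" where
  "ZL X B act = (let S = sdp X B act in
     {q \<in> carrier S \<rightarrow>\<^sub>E carrier B.
        q \<one>\<^bsub>S\<^esub> = \<one>\<^bsub>B\<^esub> \<and>
        (\<forall>b\<in>carrier B. \<forall>a\<in>carrier S. q (iota_B X b \<otimes>\<^bsub>S\<^esub> a) = b \<otimes>\<^bsub>B\<^esub> q a) \<and>
        (\<forall>a\<in>carrier S. \<forall>a'\<in>carrier S. q (a \<otimes>\<^bsub>S\<^esub> a') = q (a \<otimes>\<^bsub>S\<^esub> iota_B X (q a')))})"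

definition desc_rel ::
  "('x,'c) monoid_scheme \<Rightarrow> ('b,'d) monoid_scheme \<Rightarrow> ('x \<Rightarrow> 'b \<Rightarrow> 'b) \<Rightarrow> (('b \<times> 'x \<Rightarrow> 'b) \<times> ('b \<times> 'x \<Rightarrow> 'b)) set" where
  "desc_rel X B act = {(q, q'). q \<in> ZL X B act \<and> q' \<in> ZL X B act \<and>
     (\<exists>b0\<in>carrier B. \<forall>a\<in>carrier (sdp X B act).
        q a \<otimes>\<^bsub>B\<^esub> b0 = q' (a \<otimes>\<^bsub>sdp X B act\<^esub> iota_B X b0))}"

definition Desc1 ::
  "('x,'c) monoid_scheme \<Rightarrow> ('b,'d) monoid_scheme \<Rightarrow> ('x \<Rightarrow> 'b \<Rightarrow> 'b) \<Rightarrow> ('b \<times> 'x \<Rightarrow> 'b) set set" where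
  "Desc1 X B act = ZL X B act // desc_rel X B act"

definition Desc1_base ::
  "('x,'c) monoid_scheme \<Rightarrow> ('b,'d) monoid_scheme \<Rightarrow> ('x \<Rightarrow> 'b \<Rightarrow> 'b) \<Rightarrow> ('b \<times> 'x \<Rightarrow> 'b) set" where
  "Desc1_base X B act = desc_rel X B act `` {p_B X B act}"

text \<open>Desc^0: automorphisms b \<mapsto> b b0 of the algebra ((B,m_B),p_B), under composition.\<close>
definition Desc0 ::
  "('x,'c) monoid_scheme \<Rightarrow> ('b,'d) monoid_scheme \<Rightarrow> ('x \<Rightarrow> 'b \<Rightarrow> 'b) \<Rightarrow> ('b \<Rightarrow> 'b) monoid" where
  "Desc0 X B act = \<lparr> carrier = {(\<lambda>b\<in>carrier B. b \<otimes>\<^bsub>B\<^esub> b0) | b0. b0 \<in> carrier B \<and>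
        (\<forall>a\<in>carrier (sdp X B act).
           p_B X B act (a \<otimes>\<^bsub>sdp X B act\<^esub> iota_B X b0) = p_B X B act a \<otimes>\<^bsub>B\<^esub> b0)},
     mult = (\<lambda>f g. compose (carrier B) f g),
     one = (\<lambda>b\<in>carrier B. b) \<rparr>"

end

theory Submission
  imports Defs
begin

text \<open>
  By (ZL2) an algebra structure \<open>q\<close> is determined by \<open>u x = q (1, x)\<close>, since
  \<open>q (b, x) = b u(x)\<close>, and (ZL3) applied to \<open>\<iota>\<^sub>X x\<close>, \<open>\<iota>\<^sub>X y\<close> says exactly that
  \<open>x \<mapsto> u(x)\<inverse>\<close> is a 1-cocycle; conversely every cocycle \<open>r\<close> yields the structure
  \<open>(b, x) \<mapsto> b r(x)\<inverse>\<close>. Under this bijection the relation \<open>q \<sim> q'\<close> witnessed by \<open>b\<^sub>0\<close>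
  becomes \<open>r \<sim> r'\<close> witnessed by the same \<open>b\<^sub>0\<close>, so the bijection descends to the
  quotients, and \<open>p\<^sub>B\<close> corresponds to the trivial cocycle. For \<open>Desc\<^sup>0\<close>, evaluating
  the condition on \<open>\<iota>\<^sub>X x\<close> shows that \<open>b \<mapsto> b b\<^sub>0\<close> is an automorphism of the
  algebra exactly when \<open>b\<^sub>0\<close> is \<open>X\<close>-fixed.
\<close>

lemma Image_singleton_transport:
  assumes f: "bij_betw f A A'"
    and R: "R \<subseteq> A \<times> A" and R': "R' \<subseteq> A' \<times> A'"
    and resp: "\<And>a b. a \<in> A \<Longrightarrow> b \<in> A \<Longrightarrow> (a, b) \<in> R \<longleftrightarrow> (f a, f b) \<in> R'"
    and a: "a \<in> A"
  shows "f ` (R `` {a}) = R' `` {f a}"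
proof (intro equalityI subsetI)
  fix c assume "c \<in> f ` (R `` {a})"
  then show "c \<in> R' `` {f a}" using R resp a by blast
next
  fix c assume c: "c \<in> R' `` {f a}"
  then obtain b where "b \<in> A" "c = f b"
    using R' f by (auto simp: bij_betw_def)
  then show "c \<in> f ` (R `` {a})" using c resp a by blast
qed

lemma bij_betw_image_quotient:
  assumes f: "bij_betw f A A'"
    and R: "R \<subseteq> A \<times> A" and R': "R' \<subseteq> A' \<times> A'"
    and resp: "\<And>a b. a \<in> A \<Longrightarrow> b \<in> A \<Longrightarrow> (a, b) \<in> R \<longleftrightarrow> (f a, f b) \<in> R'"
  shows "bij_betw (image f) (A // R) (A' // R')"
proof (rule bij_betw_imageI)
  have "C \<subseteq> A" if "C \<in> A // R" for C
    using that R by (auto elim!: quotientE)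
  then show "inj_on (image f) (A // R)"
    using inj_on_image_eq_iff[OF bij_betw_imp_inj_on[OF f]] by (auto intro: inj_onI)
  have "image f ` (A // R) = (\<lambda>a. R' `` {f a}) ` A"
    using Image_singleton_transport[OF assms] by (auto simp: quotient_def)
  also have "\<dots> = A' // R'"
    using f by (auto simp: quotient_def bij_betw_def)
  finally show "image f ` (A // R) = A' // R'" .
qed

lemma (in group) mult_eq_mult_iff_inv_mult:
  "a \<in> carrier G \<Longrightarrow> b \<in> carrier G \<Longrightarrow> c \<in> carrier G \<Longrightarrow> d \<in> carrier G \<Longrightarrow>
    a \<otimes> b = c \<otimes> d \<longleftrightarrow> inv a \<otimes> c = b \<otimes> inv d"
  by (metis inv_closed inv_solve_left inv_solve_right m_assoc m_closed)

locale X_group = X: group X + B: group B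
  for X :: "('x, 'c) monoid_scheme" and B :: "('b, 'd) monoid_scheme" +
  fixes act :: "'x \<Rightarrow> 'b \<Rightarrow> 'b"
  assumes act_closed: "\<And>x b. x \<in> carrier X \<Longrightarrow> b \<in> carrier B \<Longrightarrow> act x b \<in> carrier B"
    and act_one: "\<And>b. b \<in> carrier B \<Longrightarrow> act \<one>\<^bsub>X\<^esub> b = b"
    and act_mult: "\<And>x1 x2 b. x1 \<in> carrier X \<Longrightarrow> x2 \<in> carrier X \<Longrightarrow> b \<in> carrier B \<Longrightarrow>
      act (x1 \<otimes>\<^bsub>X\<^esub> x2) b = act x1 (act x2 b)"
    and act_hom: "\<And>x b1 b2. x \<in> carrier X \<Longrightarrow> b1 \<in> carrier B \<Longrightarrow> b2 \<in> carrier B \<Longrightarrow>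
      act x (b1 \<otimes>\<^bsub>B\<^esub> b2) = act x b1 \<otimes>\<^bsub>B\<^esub> act x b2"

lemma left_X_group_imp_X_group: "left_X_group X B act \<Longrightarrow> X_group X B act"
  by (simp add: left_X_group_def X_group_def X_group_axioms_def)

context X_group
begin

abbreviation S where "S \<equiv> sdp X B act"

lemma act_in_hom: "x \<in> carrier X \<Longrightarrow> act x \<in> hom B B"
  by (auto intro: homI simp: act_closed act_hom)

lemma act_fixes_one: "x \<in> carrier X \<Longrightarrow> act x \<one>\<^bsub>B\<^esub> = \<one>\<^bsub>B\<^esub>"
  using group_hom.hom_one[of B B "act x"] act_in_hom
  by (simp add: group_hom_def group_hom_axioms_def B.group_axioms)

lemma act_inv: "x \<in> carrier X \<Longrightarrow> b \<in> carrier B \<Longrightarrow> act x (inv\<^bsub>B\<^esub> b) = inv\<^bsub>B\<^esub> act x b"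
  using group_hom.hom_inv[of B B "act x"] act_in_hom
  by (simp add: group_hom_def group_hom_axioms_def B.group_axioms)

lemma sdp_carrier: "carrier S = carrier B \<times> carrier X"
  and sdp_mult: "(b1, x1) \<otimes>\<^bsub>S\<^esub> (b2, x2) = (b1 \<otimes>\<^bsub>B\<^esub> act x1 b2, x1 \<otimes>\<^bsub>X\<^esub> x2)"
  and sdp_one: "\<one>\<^bsub>S\<^esub> = (\<one>\<^bsub>B\<^esub>, \<one>\<^bsub>X\<^esub>)"
  by (simp_all add: sdp_def)

lemma ZL_extensional: "q \<in> ZL X B act \<Longrightarrow> q \<in> carrier S \<rightarrow>\<^sub>E carrier B"
  and ZL_iota_B_mult: "q \<in> ZL X B act \<Longrightarrow> b \<in> carrier B \<Longrightarrow> a \<in> carrier S \<Longrightarrow>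
    q (iota_B X b \<otimes>\<^bsub>S\<^esub> a) = b \<otimes>\<^bsub>B\<^esub> q a"
  and ZL_mult_iota_B: "q \<in> ZL X B act \<Longrightarrow> a \<in> carrier S \<Longrightarrow> a' \<in> carrier S \<Longrightarrow>
    q (a \<otimes>\<^bsub>S\<^esub> a') = q (a \<otimes>\<^bsub>S\<^esub> iota_B X (q a'))"
  by (simp_all add: ZL_def Let_def)

lemma ZL_closed: "q \<in> ZL X B act \<Longrightarrow> b \<in> carrier B \<Longrightarrow> x \<in> carrier X \<Longrightarrow> q (b, x) \<in> carrier B"
  using ZL_extensional by (force simp: sdp_carrier)

lemma ZL_pair:
  assumes q: "q \<in> ZL X B act" and b: "b \<in> carrier B" and x: "x \<in> carrier X"
  shows "q (b, x) = b \<otimes>\<^bsub>B\<^esub> q (\<one>\<^bsub>B\<^esub>, x)"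
proof -
  have "iota_B X b \<otimes>\<^bsub>S\<^esub> (\<one>\<^bsub>B\<^esub>, x) = (b, x)"
    using b x by (simp add: iota_B_def sdp_mult act_one)
  then show ?thesis using ZL_iota_B_mult[OF q b, of "(\<one>\<^bsub>B\<^esub>, x)"] x by (simp add: sdp_carrier)
qed

lemma ZL_iota_X_mult:
  assumes q: "q \<in> ZL X B act" and x: "x \<in> carrier X" and y: "y \<in> carrier X"
  shows "q (\<one>\<^bsub>B\<^esub>, x \<otimes>\<^bsub>X\<^esub> y) = act x (q (\<one>\<^bsub>B\<^esub>, y)) \<otimes>\<^bsub>B\<^esub> q (\<one>\<^bsub>B\<^esub>, x)"
proof -
  have qy: "q (\<one>\<^bsub>B\<^esub>, y) \<in> carrier B" using ZL_closed[OF q _ y] by simp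
  have "q (\<one>\<^bsub>B\<^esub>, x \<otimes>\<^bsub>X\<^esub> y) = q ((\<one>\<^bsub>B\<^esub>, x) \<otimes>\<^bsub>S\<^esub> (\<one>\<^bsub>B\<^esub>, y))"
    using x y by (simp add: sdp_mult act_fixes_one)
  also have "\<dots> = q ((\<one>\<^bsub>B\<^esub>, x) \<otimes>\<^bsub>S\<^esub> iota_B X (q (\<one>\<^bsub>B\<^esub>, y)))"
    using ZL_mult_iota_B[OF q] x y by (simp add: sdp_carrier)
  also have "\<dots> = q (act x (q (\<one>\<^bsub>B\<^esub>, y)), x)"
    using x y qy by (simp add: sdp_mult iota_B_def act_closed)
  finally show ?thesis
    using ZL_pair[OF q act_closed[OF x qy] x] by simp
qed

lemma Z1_closed: "r \<in> Z1 X B act \<Longrightarrow> x \<in> carrier X \<Longrightarrow> r x \<in> carrier B"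
  by (auto simp: Z1_def)

lemma Z1_cocycle:
  "r \<in> Z1 X B act \<Longrightarrow> x \<in> carrier X \<Longrightarrow> y \<in> carrier X \<Longrightarrow>
    r (x \<otimes>\<^bsub>X\<^esub> y) = r x \<otimes>\<^bsub>B\<^esub> act x (r y)"
  by (simp add: Z1_def)

lemma Z1_one:
  assumes r: "r \<in> Z1 X B act" shows "r \<one>\<^bsub>X\<^esub> = \<one>\<^bsub>B\<^esub>"
proof -
  have r1: "r \<one>\<^bsub>X\<^esub> \<in> carrier B" using Z1_closed[OF r] by simp
  have "r \<one>\<^bsub>X\<^esub> \<otimes>\<^bsub>B\<^esub> r \<one>\<^bsub>X\<^esub> = r \<one>\<^bsub>X\<^esub>"
    using Z1_cocycle[OF r, of "\<one>\<^bsub>X\<^esub>" "\<one>\<^bsub>X\<^esub>"] r1 act_one by simp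
  then show ?thesis using r1 by simp
qed

definition cocycle_of_algebra :: "('b \<times> 'x \<Rightarrow> 'b) \<Rightarrow> 'x \<Rightarrow> 'b" where
  "cocycle_of_algebra q = (\<lambda>x\<in>carrier X. inv\<^bsub>B\<^esub> (q (iota_X B x)))"

definition algebra_of_cocycle :: "('x \<Rightarrow> 'b) \<Rightarrow> 'b \<times> 'x \<Rightarrow> 'b" where
  "algebra_of_cocycle r = (\<lambda>(b, x)\<in>carrier S. b \<otimes>\<^bsub>B\<^esub> inv\<^bsub>B\<^esub> (r x))"

lemma cocycle_of_algebra_Z1:
  assumes q: "q \<in> ZL X B act" shows "cocycle_of_algebra q \<in> Z1 X B act"
proof -
  have "inv\<^bsub>B\<^esub> q (\<one>\<^bsub>B\<^esub>, x \<otimes>\<^bsub>X\<^esub> y) = inv\<^bsub>B\<^esub> q (\<one>\<^bsub>B\<^esub>, x) \<otimes>\<^bsub>B\<^esub> act x (inv\<^bsub>B\<^esub> q (\<one>\<^bsub>B\<^esub>, y))"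
    if x: "x \<in> carrier X" and y: "y \<in> carrier X" for x y
    using ZL_iota_X_mult[OF q x y] ZL_closed[OF q _ x] ZL_closed[OF q _ y] x
    by (simp add: act_inv act_closed B.inv_mult_group)
  then show ?thesis
    using ZL_closed[OF q] by (auto simp: Z1_def cocycle_of_algebra_def iota_X_def)
qed

lemma algebra_of_cocycle_ZL:
  assumes r: "r \<in> Z1 X B act" shows "algebra_of_cocycle r \<in> ZL X B act"
proof -
  note rB = Z1_closed[OF r]
  have G: "algebra_of_cocycle r (b, x) = b \<otimes>\<^bsub>B\<^esub> inv\<^bsub>B\<^esub> r x"
    if "b \<in> carrier B" "x \<in> carrier X" for b x
    using that by (simp add: algebra_of_cocycle_def sdp_carrier)
  have ZL3: "algebra_of_cocycle r ((b, x) \<otimes>\<^bsub>S\<^esub> (b', x'))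
      = algebra_of_cocycle r ((b, x) \<otimes>\<^bsub>S\<^esub> iota_B X (algebra_of_cocycle r (b', x')))"
    if c: "b \<in> carrier B" "x \<in> carrier X" "b' \<in> carrier B" "x' \<in> carrier X" for b x b' x'
    using c rB[of x] rB[of x'] Z1_cocycle[OF r c(2) c(4)]
    by (simp add: sdp_mult iota_B_def G act_closed act_inv act_hom B.inv_mult_group B.m_assoc)
  show ?thesis
    using rB Z1_one[OF r] ZL3
    by (auto simp: ZL_def Let_def sdp_carrier sdp_one iota_B_def sdp_mult act_one G B.m_assoc
        algebra_of_cocycle_def[of r])
qed

lemma algebra_of_cocycle_of_algebra:
  assumes q: "q \<in> ZL X B act" shows "algebra_of_cocycle (cocycle_of_algebra q) = q"
proof
  fix a show "algebra_of_cocycle (cocycle_of_algebra q) a = q a"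
  proof (cases "a \<in> carrier S")
    case True
    then obtain b x where a: "a = (b, x)" "b \<in> carrier B" "x \<in> carrier X"
      by (auto simp: sdp_carrier)
    then show ?thesis
      using ZL_pair[OF q a(2,3)] ZL_closed[OF q B.one_closed a(3)] True
      by (simp add: algebra_of_cocycle_def cocycle_of_algebra_def iota_X_def)
  next
    case False
    then show ?thesis
      using ZL_extensional[OF q] by (auto simp: algebra_of_cocycle_def)
  qed
qed

lemma cocycle_of_algebra_of_cocycle:
  assumes r: "r \<in> Z1 X B act" shows "cocycle_of_algebra (algebra_of_cocycle r) = r"
proof
  fix x show "cocycle_of_algebra (algebra_of_cocycle r) x = r x"
    using r Z1_closed[OF r] by (auto simp: cocycle_of_algebra_def algebra_of_cocycle_def iota_X_def sdp_carrier Z1_def)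
qed

lemma bij_betw_cocycle_of_algebra: "bij_betw cocycle_of_algebra (ZL X B act) (Z1 X B act)"
  by (rule bij_betw_byWitness[where f' = algebra_of_cocycle])
    (auto simp: algebra_of_cocycle_of_algebra cocycle_of_algebra_of_cocycle
      cocycle_of_algebra_Z1 algebra_of_cocycle_ZL)

lemma desc_rel_iff_coh_rel:
  assumes q: "q \<in> ZL X B act" and q': "q' \<in> ZL X B act"
  shows "(q, q') \<in> desc_rel X B act \<longleftrightarrow> (cocycle_of_algebra q, cocycle_of_algebra q') \<in> coh_rel X B act"
proof -
  have pointwise: "q a \<otimes>\<^bsub>B\<^esub> b0 = q' (a \<otimes>\<^bsub>S\<^esub> iota_B X b0) \<longleftrightarrow>
      cocycle_of_algebra q x \<otimes>\<^bsub>B\<^esub> act x b0 = b0 \<otimes>\<^bsub>B\<^esub> cocycle_of_algebra q' x"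
    if b0: "b0 \<in> carrier B" and a: "a = (b, x)" "b \<in> carrier B" "x \<in> carrier X" for a b x b0
  proof -
    let ?u = "q (\<one>\<^bsub>B\<^esub>, x)" and ?u' = "q' (\<one>\<^bsub>B\<^esub>, x)" and ?c = "act x b0"
    have c: "?u \<in> carrier B" "?u' \<in> carrier B" "?c \<in> carrier B"
      using ZL_closed[OF q _ a(3)] ZL_closed[OF q' _ a(3)] act_closed[OF a(3) b0] by auto
    have "a \<otimes>\<^bsub>S\<^esub> iota_B X b0 = (b \<otimes>\<^bsub>B\<^esub> ?c, x)"
      using a by (simp add: sdp_mult iota_B_def)
    then have "q a \<otimes>\<^bsub>B\<^esub> b0 = q' (a \<otimes>\<^bsub>S\<^esub> iota_B X b0) \<longleftrightarrow>
        b \<otimes>\<^bsub>B\<^esub> (?u \<otimes>\<^bsub>B\<^esub> b0) = b \<otimes>\<^bsub>B\<^esub> (?c \<otimes>\<^bsub>B\<^esub> ?u')"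
      using ZL_pair[OF q a(2,3)] ZL_pair[OF q' B.m_closed[OF a(2) c(3)] a(3)] a c b0
      by (simp add: B.m_assoc)
    also have "\<dots> \<longleftrightarrow> ?u \<otimes>\<^bsub>B\<^esub> b0 = ?c \<otimes>\<^bsub>B\<^esub> ?u'"
      using a c b0 by simp
    also have "\<dots> \<longleftrightarrow> inv\<^bsub>B\<^esub> ?u \<otimes>\<^bsub>B\<^esub> ?c = b0 \<otimes>\<^bsub>B\<^esub> inv\<^bsub>B\<^esub> ?u'"
      using B.mult_eq_mult_iff_inv_mult[OF c(1) b0 c(3) c(2)] .
    finally show ?thesis
      using a by (simp add: cocycle_of_algebra_def iota_X_def)
  qed
  have "(\<forall>a\<in>carrier S. q a \<otimes>\<^bsub>B\<^esub> b0 = q' (a \<otimes>\<^bsub>S\<^esub> iota_B X b0)) \<longleftrightarrow>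
      (\<forall>x\<in>carrier X. cocycle_of_algebra q x \<otimes>\<^bsub>B\<^esub> act x b0 = b0 \<otimes>\<^bsub>B\<^esub> cocycle_of_algebra q' x)"
    (is "?L b0 \<longleftrightarrow> ?R b0") if b0: "b0 \<in> carrier B" for b0
  proof
    assume L: "?L b0"
    show "?R b0"
    proof
      fix x assume x: "x \<in> carrier X"
      then have "(\<one>\<^bsub>B\<^esub>, x) \<in> carrier S" by (simp add: sdp_carrier)
      with L show "cocycle_of_algebra q x \<otimes>\<^bsub>B\<^esub> act x b0 = b0 \<otimes>\<^bsub>B\<^esub> cocycle_of_algebra q' x"
        using pointwise[OF b0 refl B.one_closed x] by blast
    qed
  next
    assume "?R b0"
    then show "?L b0" using pointwise[OF b0] by (auto simp: sdp_carrier)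
  qed
  then have "(\<exists>b0\<in>carrier B. ?L b0) \<longleftrightarrow> (\<exists>b0\<in>carrier B. ?R b0)"
    by (rule bex_cong[OF refl])
  then show ?thesis
    using q q' cocycle_of_algebra_Z1 unfolding desc_rel_def coh_rel_def by simp
qed

lemma p_B_eq_algebra_of_triv_cocycle: "p_B X B act = algebra_of_cocycle (triv_cocycle X B)"
  by (auto simp: p_B_def algebra_of_cocycle_def triv_cocycle_def sdp_carrier fun_eq_iff)

lemma triv_cocycle_Z1: "triv_cocycle X B \<in> Z1 X B act"
  by (auto simp: Z1_def triv_cocycle_def act_fixes_one)

lemma desc_rel_subset: "desc_rel X B act \<subseteq> ZL X B act \<times> ZL X B act"
  and coh_rel_subset: "coh_rel X B act \<subseteq> Z1 X B act \<times> Z1 X B act"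
  by (auto simp: desc_rel_def coh_rel_def)

lemma cocycle_of_algebra_desc_class:
  "q \<in> ZL X B act \<Longrightarrow>
    cocycle_of_algebra ` (desc_rel X B act `` {q}) = coh_rel X B act `` {cocycle_of_algebra q}"
  by (rule Image_singleton_transport[OF bij_betw_cocycle_of_algebra desc_rel_subset coh_rel_subset
        desc_rel_iff_coh_rel])

lemma bij_betw_Desc1_H1: "bij_betw (image cocycle_of_algebra) (Desc1 X B act) (H1 X B act)"
  unfolding Desc1_def H1_def
  by (rule bij_betw_image_quotient[OF bij_betw_cocycle_of_algebra desc_rel_subset coh_rel_subset
        desc_rel_iff_coh_rel])

lemma cocycle_of_algebra_Desc1_base: "cocycle_of_algebra ` Desc1_base X B act = H1_base X B act"
  using cocycle_of_algebra_desc_class[OF algebra_of_cocycle_ZL[OF triv_cocycle_Z1]]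
  unfolding Desc1_base_def H1_base_def p_B_eq_algebra_of_triv_cocycle
  by (simp add: cocycle_of_algebra_of_cocycle[OF triv_cocycle_Z1])

lemma H0_subgroup: "subgroup (H0 X B act) B"
proof (rule B.subgroupI)
  show "H0 X B act \<subseteq> carrier B" "H0 X B act \<noteq> {}"
    using act_fixes_one by (auto simp: H0_def)
  show "inv\<^bsub>B\<^esub> b \<in> H0 X B act" if "b \<in> H0 X B act" for b
    using that by (auto simp: H0_def act_inv)
  show "b \<otimes>\<^bsub>B\<^esub> c \<in> H0 X B act" if "b \<in> H0 X B act" "c \<in> H0 X B act" for b c
    using that by (auto simp: H0_def act_hom)
qed

lemma group_H0_group: "group (H0_group X B act)"
  unfolding H0_group_def by (rule B.subgroup_imp_group[OF H0_subgroup])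

lemma p_B_right_iota_B_iff:
  assumes b0: "b0 \<in> carrier B"
  shows "(\<forall>a\<in>carrier S. p_B X B act (a \<otimes>\<^bsub>S\<^esub> iota_B X b0) = p_B X B act a \<otimes>\<^bsub>B\<^esub> b0)
    \<longleftrightarrow> b0 \<in> H0 X B act"
proof
  assume L: "\<forall>a\<in>carrier S. p_B X B act (a \<otimes>\<^bsub>S\<^esub> iota_B X b0) = p_B X B act a \<otimes>\<^bsub>B\<^esub> b0"
  have "act x b0 = b0" if x: "x \<in> carrier X" for x
  proof -
    have "(\<one>\<^bsub>B\<^esub>, x) \<in> carrier S" using x by (simp add: sdp_carrier)
    with L have "p_B X B act ((\<one>\<^bsub>B\<^esub>, x) \<otimes>\<^bsub>S\<^esub> iota_B X b0) = p_B X B act (\<one>\<^bsub>B\<^esub>, x) \<otimes>\<^bsub>B\<^esub> b0"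
      by blast
    then show ?thesis
      using x b0 act_closed[OF x b0] by (simp add: sdp_mult iota_B_def p_B_def sdp_carrier)
  qed
  with b0 show "b0 \<in> H0 X B act" by (simp add: H0_def)
next
  assume "b0 \<in> H0 X B act"
  then show "\<forall>a\<in>carrier S. p_B X B act (a \<otimes>\<^bsub>S\<^esub> iota_B X b0) = p_B X B act a \<otimes>\<^bsub>B\<^esub> b0"
    by (auto simp: H0_def p_B_def sdp_mult iota_B_def sdp_carrier)
qed

definition right_mult_inv :: "'b \<Rightarrow> 'b \<Rightarrow> 'b" where
  "right_mult_inv b0 = (\<lambda>b\<in>carrier B. b \<otimes>\<^bsub>B\<^esub> inv\<^bsub>B\<^esub> b0)"

lemma carrier_Desc0: "carrier (Desc0 X B act) = right_mult_inv ` H0 X B act"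
proof -
  have H0_closed: "b0 \<in> H0 X B act \<Longrightarrow> b0 \<in> carrier B" for b0
    by (simp add: H0_def)
  have "carrier (Desc0 X B act) = (\<lambda>b0. \<lambda>b\<in>carrier B. b \<otimes>\<^bsub>B\<^esub> b0) ` H0 X B act"
    using p_B_right_iota_B_iff H0_closed by (auto simp: Desc0_def)
  also have "\<dots> = right_mult_inv ` H0 X B act"
  proof (intro equalityI image_subsetI)
    fix b0 assume "b0 \<in> H0 X B act"
    then show "(\<lambda>b\<in>carrier B. b \<otimes>\<^bsub>B\<^esub> b0) \<in> right_mult_inv ` H0 X B act"
      using H0_closed subgroup.m_inv_closed[OF H0_subgroup]
      by (intro image_eqI[of _ _ "inv\<^bsub>B\<^esub> b0"]) (auto simp: right_mult_inv_def)
  next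
    fix b0 assume "b0 \<in> H0 X B act"
    then show "right_mult_inv b0 \<in> (\<lambda>b0. \<lambda>b\<in>carrier B. b \<otimes>\<^bsub>B\<^esub> b0) ` H0 X B act"
      using subgroup.m_inv_closed[OF H0_subgroup] by (auto simp: right_mult_inv_def)
  qed
  finally show ?thesis .
qed

text \<open>Composition reverses the order of right translations, so the inverse is needed.\<close>
lemma right_mult_inv_mult:
  "b \<in> carrier B \<Longrightarrow> c \<in> carrier B \<Longrightarrow>
    right_mult_inv (b \<otimes>\<^bsub>B\<^esub> c) = right_mult_inv b \<otimes>\<^bsub>Desc0 X B act\<^esub> right_mult_inv c"
  by (auto simp: right_mult_inv_def Desc0_def compose_def fun_eq_iff B.inv_mult_group B.m_assoc)

lemma right_mult_inv_one: "right_mult_inv \<one>\<^bsub>B\<^esub> = \<one>\<^bsub>Desc0 X B act\<^esub>"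
  by (auto simp: right_mult_inv_def Desc0_def fun_eq_iff)

lemma right_mult_inv_iso: "right_mult_inv \<in> iso (H0_group X B act) (Desc0 X B act)"
proof (rule isoI)
  have H0_closed: "b0 \<in> H0 X B act \<Longrightarrow> b0 \<in> carrier B" for b0
    by (simp add: H0_def)
  show "right_mult_inv \<in> hom (H0_group X B act) (Desc0 X B act)"
    using carrier_Desc0 H0_closed right_mult_inv_mult by (auto simp: H0_group_def hom_def)
  have "inj_on right_mult_inv (H0 X B act)"
  proof (rule inj_onI)
    fix b c assume b: "b \<in> H0 X B act" and c: "c \<in> H0 X B act"
      and eq: "right_mult_inv b = right_mult_inv c"
    have "right_mult_inv b \<one>\<^bsub>B\<^esub> = right_mult_inv c \<one>\<^bsub>B\<^esub>" using eq by simp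
    then show "b = c"
      using H0_closed[OF b] H0_closed[OF c] by (simp add: right_mult_inv_def inj_on_eq_iff[OF B.inv_inj])
  qed
  then show "bij_betw right_mult_inv (carrier (H0_group X B act)) (carrier (Desc0 X B act))"
    by (simp add: bij_betw_def H0_group_def carrier_Desc0)
qed

lemma group_Desc0: "group (Desc0 X B act)"
  using group.iso_imp_img_group[OF group_H0_group right_mult_inv_iso]
  by (simp add: H0_group_def right_mult_inv_one)

lemma Desc0_iso_H0_group: "Desc0 X B act \<cong> H0_group X B act"
  using group.iso_sym[OF group_H0_group is_isoI[OF right_mult_inv_iso]] .

end

theorem theorem5p6:
  fixes X :: "('x, 'c) monoid_scheme" and B :: "('b, 'd) monoid_scheme"
    and act :: "'x \<Rightarrow> 'b \<Rightarrow> 'b"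
  assumes "left_X_group X B act"
  shows "(\<exists>\<Phi>. bij_betw \<Phi> (Desc1 X B act) (H1 X B act)
            \<and> \<Phi> (Desc1_base X B act) = H1_base X B act
            \<and> (\<forall>q\<in>ZL X B act.
                 (\<lambda>x\<in>carrier X. inv\<^bsub>B\<^esub> (q (iota_X B x))) \<in> Z1 X B act
               \<and> \<Phi> (desc_rel X B act `` {q})
                   = coh_rel X B act `` {(\<lambda>x\<in>carrier X. inv\<^bsub>B\<^esub> (q (iota_X B x)))}))
       \<and> group (Desc0 X B act)
       \<and> Desc0 X B act \<cong> H0_group X B act"
proof -
  interpret X_group X B act
    using assms by (rule left_X_group_imp_X_group)
  have "\<forall>q\<in>ZL X B act. cocycle_of_algebra q \<in> Z1 X B act
      \<and> cocycle_of_algebra ` (desc_rel X B act `` {q}) = coh_rel X B act `` {cocycle_of_algebra q}"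
    using cocycle_of_algebra_Z1 cocycle_of_algebra_desc_class by blast
  then have "\<exists>\<Phi>. bij_betw \<Phi> (Desc1 X B act) (H1 X B act)
      \<and> \<Phi> (Desc1_base X B act) = H1_base X B act
      \<and> (\<forall>q\<in>ZL X B act. cocycle_of_algebra q \<in> Z1 X B act
        \<and> \<Phi> (desc_rel X B act `` {q}) = coh_rel X B act `` {cocycle_of_algebra q})"
    using bij_betw_Desc1_H1 cocycle_of_algebra_Desc1_base by blast
  then show ?thesis
    using group_Desc0 Desc0_iso_H0_group unfolding cocycle_of_algebra_def by blast
qed

end
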